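(* Let $\bm{A}=[\bm{A}_1\ \bm{A}_2]$ have full column rank with $\bm{A}_j^\top\bm{A}_j=\bm{I}_j$, $\bm{C}:=\bm{A}_2^\top\bm{A}_1\ne0$, $r:=\operatorname{rank}(\bm{C})$. Then $\min_{\gamma_1>0}\rho(\bm{M}(\gamma_1,1))=\dfrac{\lambda_1(\bm{C}\bm{C}^\top)}{2-\lambda_1(\bm{C}\bm{C}^\top)}$ if $r<n_1$, attained at $\gamma_1=\frac{2}{2-\lambda_1(\bm{C}\bm{C}^\top)}$; and $\min_{\gamma_1>0}\rho(\bm{M}(\gamma_1,1))=\dfrac{\lambda_1(\bm{C}\bm{C}^\top)-\lambda_r(\bm{C}\bm{C}^\top)}{2-\lambda_1(\bm{C}\bm{C}^\top)-\lambda_r(\bm{C}\bm{C}^\top)}$ if $r=n_1$, attained (when $r=n_1>1$) at $\gamma_1=\frac{2}{2-\lambda_1(\bm{C}\bm{C}^\top)-\lambda_r(\bm{C}\bm{C}^\top)}$.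
   Context: $\rho$: spectral radius; $\lambda_i$: $i$-th largest eigenvalue. $\bm{M}(\gamma_1,\gamma_2)=\begin{bmatrix}(1-\gamma_1)\bm{I}_1&-\gamma_1\bm{C}^\top\\-\gamma_2(1-\gamma_1)\bm{C}&(1-\gamma_2)\bm{I}_2+\gamma_1\gamma_2\bm{C}\bm{C}^\top\end{bmatrix}$, the two-block gradient descent iteration matrix with stepsizes $\gamma_1,\gamma_2$ for $\frac12\|\bm{A}\bm{x}-\bm{y}\|^2$ under $\bm{A}_j^\top\bm{A}_j=\bm{I}_j$. *)

theory Defs
  imports "Jordan_Normal_Form.Spectral_Radius" "Jordan_Normal_Form.DL_Rank" "HOL-Library.Multiset"
begin

definition hcat :: "real mat \<Rightarrow> real mat \<Rightarrow> real mat" where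
  "hcat A1 A2 = mat (dim_row A1) (dim_col A1 + dim_col A2)
     (\<lambda>(i,j). if j < dim_col A1 then A1 $$ (i,j) else A2 $$ (i, j - dim_col A1))"

text \<open>Two-block gradient descent iteration matrix M(g1,g2) built from C (of size n2 x n1).\<close>
definition Mmat :: "real mat \<Rightarrow> real \<Rightarrow> real \<Rightarrow> real mat" where
  "Mmat C g1 g2 = four_block_mat
      ((1 - g1) \<cdot>\<^sub>m 1\<^sub>m (dim_col C))              ((- g1) \<cdot>\<^sub>m C\<^sup>T)
      ((- (g2 * (1 - g1))) \<cdot>\<^sub>m C)  ((1 - g2) \<cdot>\<^sub>m 1\<^sub>m (dim_row C) + (g1 * g2) \<cdot>\<^sub>m (C * C\<^sup>T))"

definition rho :: "real mat \<Rightarrow> real" where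
  "rho B = spectral_radius (map_mat complex_of_real B)"

text \<open>Eigenvalues (roots of the characteristic polynomial, with multiplicity) in
  non-increasing order; lam i B is the i-th largest eigenvalue (1-based).\<close>
definition eigs_desc :: "real mat \<Rightarrow> real list" where
  "eigs_desc B = rev (sorted_list_of_multiset (proots (char_poly B)))"

definition lam :: "nat \<Rightarrow> real mat \<Rightarrow> real" where
  "lam i B = eigs_desc B ! (i - 1)"

end

(* The block matrix M(g,1) factors as [I; -C] [(1-g) I, -g C^T], and the reversed product is the
   gradient step (1-g) I + g C^T C. So, up to the eigenvalue 0, the spectrum of M(g,1) is
   {1 - g (1 - mu) | mu eigenvalue of C^T C}. Orthonormal blocks and full column rank of [A1 A2]
   make C a strict contraction, hence these mu lie in [0,1), and minimising
   max |1 - g (1 - mu)| over g > 0 is the classical Richardson step-size problem: the optimum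
   g = 2 / (2 - mu_max - mu_min) gives (mu_max - mu_min) / (2 - mu_max - mu_min). Finally C C^T
   and C^T C have the same eigenvalues up to zeros (Sylvester), and mu_min = 0 exactly when
   rank C < n1. *)

theory Submission
  imports Defs
begin

text \<open>Spectral radius of \<open>I - g (I - G)\<close> for a symmetric \<open>G\<close> with spectrum \<open>S\<close>.\<close>
definition richardson_rate :: "real set \<Rightarrow> real \<Rightarrow> real" where
  "richardson_rate S g = Max ((\<lambda>\<mu>. \<bar>1 - g * (1 - \<mu>)\<bar>) ` S)"

lemma max_abs_affine_lower_bound:
  fixes p q g :: real
  assumes "0 < p" "p \<le> q"
  shows "(q - p) / (q + p) \<le> max \<bar>1 - g * p\<bar> \<bar>1 - g * q\<bar>"
proof -
  let ?m = "max \<bar>1 - g * p\<bar> \<bar>1 - g * q\<bar>"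
  have "q * (1 - g * p) \<le> q * ?m" "p * (- (1 - g * q)) \<le> p * ?m"
    using assms by (intro mult_left_mono; auto)+
  then have "q - p \<le> (q + p) * ?m" by (simp add: algebra_simps)
  then show ?thesis using assms by (simp add: divide_le_eq mult.commute)
qed

context
  fixes S :: "real set"
  assumes finite: "finite S" and nonempty: "S \<noteq> {}" and below_one: "\<forall>\<mu>\<in>S. \<mu> < 1"
begin

lemma Max_plus_Min_less_2: "Max S + Min S < 2"
proof -
  have "Max S < 1" "Min S < 1"
    using below_one Max_in[OF finite nonempty] Min_in[OF finite nonempty] by auto
  then show ?thesis by simp
qed

lemma richardson_rate_lower_bound:
  "(Max S - Min S) / (2 - Max S - Min S) \<le> richardson_rate S g"
proof -
  have Max: "Max S \<in> S" and Min: "Min S \<in> S" using finite nonempty by auto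
  have "(Max S - Min S) / (2 - Max S - Min S)
      = ((1 - Min S) - (1 - Max S)) / ((1 - Min S) + (1 - Max S))"
    by (simp add: algebra_simps)
  also have "\<dots> \<le> max \<bar>1 - g * (1 - Max S)\<bar> \<bar>1 - g * (1 - Min S)\<bar>"
    using Max below_one finite by (intro max_abs_affine_lower_bound) auto
  also have "\<dots> \<le> richardson_rate S g"
    unfolding richardson_rate_def using finite Max Min by auto
  finally show ?thesis .
qed

lemma richardson_rate_optimal_step:
  "richardson_rate S (2 / (2 - Max S - Min S)) = (Max S - Min S) / (2 - Max S - Min S)"
proof (rule antisym[OF _ richardson_rate_lower_bound])
  have den: "0 < 2 - Max S - Min S" using Max_plus_Min_less_2 by simp
  have "\<bar>1 - 2 / (2 - Max S - Min S) * (1 - \<mu>)\<bar> \<le> (Max S - Min S) / (2 - Max S - Min S)"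
    if "\<mu> \<in> S" for \<mu>
  proof -
    have "1 - 2 / (2 - Max S - Min S) * (1 - \<mu>) = (2 * \<mu> - Max S - Min S) / (2 - Max S - Min S)"
      using den by (simp add: field_simps)
    moreover have "Min S \<le> \<mu>" "\<mu> \<le> Max S" using finite that by auto
    ultimately show ?thesis using den by (simp add: divide_right_mono)
  qed
  then show "richardson_rate S (2 / (2 - Max S - Min S)) \<le> (Max S - Min S) / (2 - Max S - Min S)"
    unfolding richardson_rate_def using finite nonempty by (intro Max.boundedI) auto
qed

lemma Inf_richardson_rate:
  "Inf (richardson_rate S ` {0<..}) = (Max S - Min S) / (2 - Max S - Min S)"
proof -
  have "richardson_rate S (2 / (2 - Max S - Min S)) \<in> richardson_rate S ` {0<..}"
    using Max_plus_Min_less_2 by simp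
  then have "Inf (richardson_rate S ` {0<..}) = richardson_rate S (2 / (2 - Max S - Min S))"
    by (rule cInf_eq_minimum)
      (auto simp: richardson_rate_optimal_step richardson_rate_lower_bound)
  then show ?thesis using richardson_rate_optimal_step by simp
qed

end

lemma (in vec_space) rank_eq_ncols_iff_trivial_kernel:
  assumes A: "A \<in> carrier_mat n nc"
  shows "rank A = nc \<longleftrightarrow> (\<forall>v\<in>carrier_vec nc. A *\<^sub>v v = 0\<^sub>v n \<longrightarrow> v = 0\<^sub>v nc)"
proof
  assume r: "rank A = nc"
  have "distinct (cols A)"
  proof (rule ccontr)
    assume nd: "\<not> distinct (cols A)"
    obtain S where S: "maximal S (\<lambda>T. T \<subseteq> set (cols A) \<and> lin_indpt T)"
      using maximal_exists[of "\<lambda>T. T \<subseteq> set (cols A) \<and> lin_indpt T" "card (set (cols A))" "{}"]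
      by (meson List.finite_set card_mono empty_iff empty_subsetI finite_lin_indpt2 rev_finite_subset)
    then have "card S \<le> card (set (cols A))" by (simp add: card_mono maximal_def)
    also have "\<dots> < length (cols A)"
      using nd card_distinct card_length[of "cols A"] by (metis le_neq_implies_less)
    finally show False using rank_card_indpt[OF A S] r A by simp
  qed
  then show "\<forall>v\<in>carrier_vec nc. A *\<^sub>v v = 0\<^sub>v n \<longrightarrow> v = 0\<^sub>v nc"
    using full_rank_lin_indpt[OF A r] lin_depI[OF A] by blast
next
  assume kernel: "\<forall>v\<in>carrier_vec nc. A *\<^sub>v v = 0\<^sub>v n \<longrightarrow> v = 0\<^sub>v nc"
  show "rank A = nc"
  proof (cases "distinct (cols A)")
    case True
    show ?thesis
      using lin_indpt_full_rank[OF A True] lin_depE[OF A _ True] kernel by blast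
  next
    case False
    then obtain i j where ij: "i < nc" "j < nc" "i \<noteq> j" "col A i = col A j"
      using A by (auto simp: distinct_conv_nth)
    define v :: "'a vec" where "v = unit_vec nc i - unit_vec nc j"
    have "v $ i = 1" using ij unfolding v_def by simp
    then have "v \<noteq> 0\<^sub>v nc" using ij by auto
    moreover have "A *\<^sub>v v = 0\<^sub>v n"
    proof (rule eq_vecI)
      fix k assume "k < dim_vec (0\<^sub>v n)"
      then have k: "k < n" by simp
      have "A $$ (k, i) = A $$ (k, j)" using ij A k by (metis carrier_matD(1) col_def index_vec)
      moreover have "(A *\<^sub>v v) $ k = row A k \<bullet> unit_vec nc i - row A k \<bullet> unit_vec nc j"
        unfolding v_def using A k by (simp add: scalar_prod_minus_distrib[of _ nc])
      ultimately show "(A *\<^sub>v v) $ k = 0\<^sub>v n $ k" using A k ij by simp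
    qed (use A in simp)
    ultimately show ?thesis using kernel unfolding v_def by auto
  qed
qed

lemma scalar_prod_self_nonneg: "0 \<le> (v :: real vec) \<bullet> v"
  using conjugate_square_ge_0_vec[of v] by simp

lemma scalar_prod_self_pos_iff:
  "(v :: real vec) \<in> carrier_vec n \<Longrightarrow> 0 < v \<bullet> v \<longleftrightarrow> v \<noteq> 0\<^sub>v n"
  using conjugate_square_greater_0_vec[of v n] by simp

lemma mult_mat_vec_scalar_prod_transpose:
  fixes X :: "'a :: comm_semiring_0 mat"
  assumes "X \<in> carrier_mat nr nc" "a \<in> carrier_vec nc" "b \<in> carrier_vec nr"
  shows "(X *\<^sub>v a) \<bullet> b = a \<bullet> (X\<^sup>T *\<^sub>v b)"
  using transpose_vec_mult_scalar[OF assms] assms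
  by (metis comm_scalar_prod mult_mat_vec_carrier transpose_carrier_mat)

lemma map_vec_Re_Im_mult_mat_vec:
  fixes X :: "real mat" and u :: "complex vec"
  assumes "X \<in> carrier_mat nr nc" and "u \<in> carrier_vec nc"
  shows "map_vec Re (map_mat of_real X *\<^sub>v u) = X *\<^sub>v map_vec Re u"
    and "map_vec Im (map_mat of_real X *\<^sub>v u) = X *\<^sub>v map_vec Im u"
  by (rule eq_vecI; use assms in \<open>auto simp: scalar_prod_def Re_sum Im_sum\<close>)+

text \<open>The usual argument for Hermitian matrices, written out for the real and imaginary
  parts \<open>a, b\<close> of a complex eigenvector: symmetry forces \<open>Im k * (a \<bullet> a + b \<bullet> b) = 0\<close>.\<close>
lemma symmetric_real_mat_eigenvalue_real:
  fixes G :: "real mat"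
  assumes G: "G \<in> carrier_mat n n" and sym: "G\<^sup>T = G"
    and ev: "eigenvector (map_mat of_real G) u k"
  shows "Im k = 0 \<and> (\<exists>w\<in>carrier_vec n. w \<noteq> 0\<^sub>v n \<and> G *\<^sub>v w = Re k \<cdot>\<^sub>v w)"
proof -
  have u: "u \<in> carrier_vec n" and u0: "u \<noteq> 0\<^sub>v n"
    and eu: "map_mat of_real G *\<^sub>v u = k \<cdot>\<^sub>v u"
    using ev G unfolding eigenvector_def by auto
  define a where "a = map_vec Re u"
  define b where "b = map_vec Im u"
  have a: "a \<in> carrier_vec n" and b: "b \<in> carrier_vec n" unfolding a_def b_def using u by auto
  have Ga: "G *\<^sub>v a = Re k \<cdot>\<^sub>v a - Im k \<cdot>\<^sub>v b"
    unfolding a_def map_vec_Re_Im_mult_mat_vec(1)[OF G u, symmetric] eu b_def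
    by (rule eq_vecI) auto
  have Gb: "G *\<^sub>v b = Im k \<cdot>\<^sub>v a + Re k \<cdot>\<^sub>v b"
    unfolding b_def map_vec_Re_Im_mult_mat_vec(2)[OF G u, symmetric] eu a_def
    by (rule eq_vecI) (auto simp: algebra_simps)
  have "b \<bullet> (G *\<^sub>v a) = a \<bullet> (G *\<^sub>v b)"
    using mult_mat_vec_scalar_prod_transpose[OF G a b] sym comm_scalar_prod[OF b, of "G *\<^sub>v a"] G a
    by auto
  then have "Im k * (a \<bullet> a + b \<bullet> b) = 0"
    unfolding Ga Gb using a b comm_scalar_prod[OF a b]
    by (simp add: scalar_prod_add_distrib[of _ n] scalar_prod_minus_distrib[of _ n] algebra_simps)
  moreover have "a \<noteq> 0\<^sub>v n \<or> b \<noteq> 0\<^sub>v n"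
  proof (rule ccontr)
    assume "\<not> ?thesis"
    then have "a $ i = 0" "b $ i = 0" if "i < n" for i
      using that by auto
    then have "u = 0\<^sub>v n"
      using u unfolding a_def b_def by (intro eq_vecI) (auto simp: complex_eq_iff)
    with u0 show False ..
  qed
  then have "a \<bullet> a + b \<bullet> b > 0"
    using scalar_prod_self_pos_iff[OF a] scalar_prod_self_pos_iff[OF b]
      scalar_prod_self_nonneg[of a] scalar_prod_self_nonneg[of b] by linarith
  ultimately have Im0: "Im k = 0" by simp
  show ?thesis
  proof (cases "a = 0\<^sub>v n")
    case False
    then show ?thesis using Ga Im0 a b by (auto intro!: bexI[of _ a])
  next
    case True
    then show ?thesis using Gb Im0 a b \<open>a \<noteq> 0\<^sub>v n \<or> b \<noteq> 0\<^sub>v n\<close> by (auto intro!: bexI[of _ b])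
  qed
qed

lemma proots_prod_list_linear: "proots (\<Prod>d\<leftarrow>ds. [:- d, 1:]) = mset (ds :: 'a :: idom list)"
proof -
  have "0 \<notin> (\<lambda>d. [:- d, 1:]) ` set ds" by auto
  then show ?thesis
    using proots_prod_list[of "map (\<lambda>d. [:- d, 1:]) ds"]
    by (auto simp: o_def sum_list_singleton_mset)
qed

lemma proots_monom_one: "proots (monom (1 :: 'a :: idom) n) = replicate_mset n 0"
  by (simp add: monom_altdef proots_power)

lemma in_proots_char_poly_iff_eigenvalue:
  fixes A :: "'a :: field mat"
  assumes "A \<in> carrier_mat n n"
  shows "d \<in># proots (char_poly A) \<longleftrightarrow> eigenvalue A d"
proof -
  have "char_poly A \<noteq> 0" using degree_monic_char_poly[OF assms] by auto
  then show ?thesis using eigenvalue_root_char_poly[OF assms] by simp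
qed

lemma spectrum_eq_set_proots_char_poly:
  fixes A :: "'a :: field mat"
  assumes "A \<in> carrier_mat n n"
  shows "spectrum A = set_mset (proots (char_poly A))"
proof -
  have "char_poly A \<noteq> 0" using degree_monic_char_poly[OF assms] by auto
  then show ?thesis using spectrum_root_char_poly[OF assms] by simp
qed

lemma real_char_poly_splits:
  fixes A :: "real mat"
  assumes A: "A \<in> carrier_mat n n"
    and real: "\<forall>k\<in>spectrum (map_mat complex_of_real A). Im k = 0"
  shows "size (proots (char_poly A)) = n"
    and "spectrum (map_mat complex_of_real A) = of_real ` set_mset (proots (char_poly A))"
proof -
  let ?Ac = "map_mat complex_of_real A"
  have Ac: "?Ac \<in> carrier_mat n n" using A by simp
  obtain es where cp: "char_poly ?Ac = (\<Prod>e\<leftarrow>es. [:- e, 1:])" and len: "length es = n"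
    using char_poly_factorized[OF Ac] by auto
  have spec: "spectrum ?Ac = set es"
    unfolding spectrum_root_char_poly[OF Ac] cp by (auto simp: poly_prod_list_zero_iff)
  then have es_real: "e = of_real (Re e)" if "e \<in> set es" for e
    using real that by (simp add: complex_eq_iff)
  have cp_real: "char_poly ?Ac = map_poly of_real (char_poly A)"
    using of_real_hom.char_poly_hom[OF A] by simp
  have "poly (char_poly A) = poly (\<Prod>d\<leftarrow>map Re es. [:- d, 1:])"
  proof
    fix x
    have "complex_of_real (poly (char_poly A) x) = poly (char_poly ?Ac) (of_real x)"
      unfolding cp_real by simp
    also have "\<dots> = (\<Prod>e\<leftarrow>es. of_real x - e)"
      unfolding cp by (simp add: poly_prod_list o_def)
    also have "\<dots> = of_real (\<Prod>e\<leftarrow>es. x - Re e)"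
      using es_real by (induction es) auto
    finally show "poly (char_poly A) x = poly (\<Prod>d\<leftarrow>map Re es. [:- d, 1:]) x"
      by (simp add: poly_prod_list o_def)
  qed
  then have proots: "proots (char_poly A) = mset (map Re es)"
    unfolding poly_eq_poly_eq_iff by (simp only: proots_prod_list_linear)
  then show "size (proots (char_poly A)) = n" using len by simp
  show "spectrum ?Ac = of_real ` set_mset (proots (char_poly A))"
    unfolding proots spec using es_real by (auto simp: image_image)
qed

text \<open>Sylvester's determinant identity, via the two block eliminations of
  \<open>[x I, B; C, I]\<close>.\<close>
lemma det_sylvester:
  fixes B C :: "'a :: field mat"
  assumes B: "B \<in> carrier_mat n1 n2" and C: "C \<in> carrier_mat n2 n1" and x: "x \<noteq> 0"
  shows "x ^ n2 * det (x \<cdot>\<^sub>m 1\<^sub>m n1 - B * C) = x ^ n1 * det (x \<cdot>\<^sub>m 1\<^sub>m n2 - C * B)"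
proof -
  define K where "K = four_block_mat (x \<cdot>\<^sub>m 1\<^sub>m n1) B C (1\<^sub>m n2)"
  define P where "P = four_block_mat (1\<^sub>m n1) (- B) (0\<^sub>m n2 n1) (1\<^sub>m n2)"
  define Q where "Q = four_block_mat (1\<^sub>m n1) (0\<^sub>m n1 n2) ((- (1 / x)) \<cdot>\<^sub>m C) (1\<^sub>m n2)"
  have K: "K \<in> carrier_mat (n1 + n2) (n1 + n2)" unfolding K_def using B C by auto
  have P: "P \<in> carrier_mat (n1 + n2) (n1 + n2)" and Q: "Q \<in> carrier_mat (n1 + n2) (n1 + n2)"
    unfolding P_def Q_def using B C by auto
  have PK: "P * K = four_block_mat (x \<cdot>\<^sub>m 1\<^sub>m n1 - B * C) (0\<^sub>m n1 n2) C (1\<^sub>m n2)"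
    unfolding P_def K_def using B C
    by (subst mult_four_block_mat[of _ n1 n1 _ n2 _ n2 _ _ n1 _ n2])
      (auto intro!: cong_four_block_mat eq_matI simp: scalar_prod_def sum.distrib sum_subtractf)
  have QK: "Q * K = four_block_mat (x \<cdot>\<^sub>m 1\<^sub>m n1) B (0\<^sub>m n2 n1) (1\<^sub>m n2 - (1 / x) \<cdot>\<^sub>m (C * B))"
    unfolding Q_def K_def using B C
  proof (subst mult_four_block_mat[of _ n1 n1 _ n2 _ n2 _ _ n1 _ n2], simp_all,
      intro cong_four_block_mat)
    show "- (1 / x) \<cdot>\<^sub>m C * (x \<cdot>\<^sub>m 1\<^sub>m n1) + C = 0\<^sub>m n2 n1"
      using C x by (auto intro!: eq_matI)
    show "- (1 / x) \<cdot>\<^sub>m C * B + 1\<^sub>m n2 = 1\<^sub>m n2 - (1 / x) \<cdot>\<^sub>m (C * B)"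
      using B C by (subst mult_smult_assoc_mat[of _ n2 n1]) (auto intro!: eq_matI)
  qed (use B C in auto)
  have "det (x \<cdot>\<^sub>m 1\<^sub>m n1 - B * C) = det (P * K)"
    unfolding PK by (subst det_four_block_mat_upper_right_zero[of _ n1 _ n2]) (use B C in auto)
  also have "\<dots> = det K"
  proof -
    have "det P = 1"
      unfolding P_def by (subst det_four_block_mat_lower_left_zero[of _ n1 _ n2]) (use B in auto)
    then show ?thesis using det_mult[OF P K] by simp
  qed
  also have "\<dots> = det (Q * K)"
  proof -
    have "det Q = 1"
      unfolding Q_def by (subst det_four_block_mat_upper_right_zero[of _ n1 _ n2]) (use C in auto)
    then show ?thesis using det_mult[OF Q K] by simp
  qed
  also have "\<dots> = x ^ n1 * det (1\<^sub>m n2 - (1 / x) \<cdot>\<^sub>m (C * B))"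
    unfolding QK by (subst det_four_block_mat_lower_left_zero[of _ n1 _ n2]) (use B C in \<open>auto simp: det_smult\<close>)
  finally have det_K: "det (x \<cdot>\<^sub>m 1\<^sub>m n1 - B * C) = x ^ n1 * det (1\<^sub>m n2 - (1 / x) \<cdot>\<^sub>m (C * B))" .
  have "x \<cdot>\<^sub>m 1\<^sub>m n2 - C * B = x \<cdot>\<^sub>m (1\<^sub>m n2 - (1 / x) \<cdot>\<^sub>m (C * B))"
    using B C x by (auto intro!: eq_matI simp: field_simps)
  then show ?thesis
    using det_K B C by (simp add: det_smult power_add algebra_simps)
qed

lemma poly_char_poly_eq_det:
  fixes A :: "'a :: field mat"
  assumes "A \<in> carrier_mat n n"
  shows "poly (char_poly A) x = det (x \<cdot>\<^sub>m 1\<^sub>m n - A)"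
proof -
  have "- char_matrix A x = x \<cdot>\<^sub>m 1\<^sub>m n - A"
    unfolding char_matrix_def using assms by (auto intro!: eq_matI)
  then show ?thesis using char_poly_matrix[OF assms] by simp
qed

lemma char_poly_mult_commute:
  fixes B C :: "'a :: field_char_0 mat"
  assumes B: "B \<in> carrier_mat n1 n2" and C: "C \<in> carrier_mat n2 n1"
  shows "monom 1 n2 * char_poly (B * C) = monom 1 n1 * char_poly (C * B)"
proof -
  let ?p = "monom 1 n2 * char_poly (B * C) - monom 1 n1 * char_poly (C * B)"
  have "UNIV - {0} \<subseteq> {x. poly ?p x = 0}"
    using det_sylvester[OF B C] poly_char_poly_eq_det[of "B * C" n1]
      poly_char_poly_eq_det[of "C * B" n2] B C
    by (auto simp: poly_monom)
  moreover have "infinite (UNIV - {0 :: 'a})"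
    by (simp add: infinite_UNIV_char_0)
  ultimately have "infinite {x. poly ?p x = 0}" using finite_subset by blast
  then show ?thesis using poly_roots_finite[of ?p] by auto
qed

lemma proots_char_poly_mult_commute:
  fixes B C :: "'a :: field_char_0 mat"
  assumes B: "B \<in> carrier_mat n1 n2" and C: "C \<in> carrier_mat n2 n1"
  shows "replicate_mset n2 0 + proots (char_poly (B * C))
       = replicate_mset n1 0 + proots (char_poly (C * B))"
proof -
  have "char_poly (B * C) \<noteq> 0" "char_poly (C * B) \<noteq> 0"
    using degree_monic_char_poly[of "B * C" n1] degree_monic_char_poly[of "C * B" n2] B C by auto
  then show ?thesis
    using arg_cong[OF char_poly_mult_commute[OF B C], of proots]
    by (simp add: proots_mult proots_monom_one)
qed

lemma insert_zero_spectrum_mult_commute: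
  fixes B C :: "'a :: field_char_0 mat"
  assumes B: "B \<in> carrier_mat n1 n2" and C: "C \<in> carrier_mat n2 n1"
  shows "insert 0 (spectrum (B * C)) = insert 0 (spectrum (C * B))"
proof -
  have "insert 0 (set_mset (replicate_mset n2 0 + proots (char_poly (B * C))))
      = insert 0 (set_mset (replicate_mset n1 0 + proots (char_poly (C * B))))"
    unfolding proots_char_poly_mult_commute[OF B C] ..
  then show ?thesis
    using spectrum_eq_set_proots_char_poly[of "B * C" n1] spectrum_eq_set_proots_char_poly[of "C * B" n2] B C
    by (auto split: if_splits)
qed

lemma smult_mat_mult_vec:
  fixes A :: "'a :: comm_ring mat"
  shows "A \<in> carrier_mat nr nc \<Longrightarrow> v \<in> carrier_vec nc \<Longrightarrow> (k \<cdot>\<^sub>m A) *\<^sub>v v = k \<cdot>\<^sub>v (A *\<^sub>v v)"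
  by (intro eq_vecI) (auto simp: scalar_prod_def sum_distrib_left ac_simps)

lemma four_block_mat_empty_blocks:
  assumes "A \<in> carrier_mat nr nc"
  shows "four_block_mat A (0\<^sub>m nr 0) (0\<^sub>m 0 nc) (0\<^sub>m 0 0) = A"
  using assms by (intro eq_matI) auto

lemma spectrum_affine:
  fixes G :: "'a :: field mat"
  assumes G: "G \<in> carrier_mat n n" and b: "b \<noteq> 0"
  shows "spectrum (a \<cdot>\<^sub>m 1\<^sub>m n + b \<cdot>\<^sub>m G) = (\<lambda>\<mu>. a + b * \<mu>) ` spectrum G"
proof -
  have affine_mult: "(a \<cdot>\<^sub>m 1\<^sub>m n + b \<cdot>\<^sub>m G) *\<^sub>v v = a \<cdot>\<^sub>v v + b \<cdot>\<^sub>v (G *\<^sub>v v)"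
    if "v \<in> carrier_vec n" for v
    using G that by (simp add: add_mult_distrib_mat_vec[of _ n n] smult_mat_mult_vec[of _ n n])
  have "eigenvector (a \<cdot>\<^sub>m 1\<^sub>m n + b \<cdot>\<^sub>m G) v k \<longleftrightarrow> eigenvector G v ((k - a) / b)" for v k
  proof -
    have eq_iff: "a \<cdot>\<^sub>v v + b \<cdot>\<^sub>v (G *\<^sub>v v) = k \<cdot>\<^sub>v v \<longleftrightarrow> G *\<^sub>v v = ((k - a) / b) \<cdot>\<^sub>v v"
      if "v \<in> carrier_vec n"
    proof -
      have "a \<cdot>\<^sub>v v + b \<cdot>\<^sub>v (G *\<^sub>v v) = k \<cdot>\<^sub>v v \<longleftrightarrow> (\<forall>i<n. a * v $ i + b * (G *\<^sub>v v) $ i = k * v $ i)"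
        using that G by (auto simp: vec_eq_iff)
      also have "\<dots> \<longleftrightarrow> (\<forall>i<n. (G *\<^sub>v v) $ i = (k - a) / b * v $ i)"
        using b by (auto simp: field_simps)
      also have "\<dots> \<longleftrightarrow> G *\<^sub>v v = ((k - a) / b) \<cdot>\<^sub>v v"
        using that G by (auto simp: vec_eq_iff)
      finally show ?thesis .
    qed
    show ?thesis
    proof (cases "v \<in> carrier_vec n")
      case True
      then show ?thesis
        using G eq_iff[OF True] affine_mult[OF True] unfolding eigenvector_def by simp
    qed (use G in \<open>simp add: eigenvector_def\<close>)
  qed
  then have ev_iff: "eigenvalue (a \<cdot>\<^sub>m 1\<^sub>m n + b \<cdot>\<^sub>m G) k \<longleftrightarrow> eigenvalue G ((k - a) / b)" for k
    unfolding eigenvalue_def by blast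
  show ?thesis
  proof (intro equalityI subsetI)
    fix k assume "k \<in> spectrum (a \<cdot>\<^sub>m 1\<^sub>m n + b \<cdot>\<^sub>m G)"
    then have "(k - a) / b \<in> spectrum G" unfolding spectrum_def ev_iff by simp
    moreover have "k = a + b * ((k - a) / b)" using b by simp
    ultimately show "k \<in> (\<lambda>\<mu>. a + b * \<mu>) ` spectrum G" by (rule rev_image_eqI)
  next
    fix k assume "k \<in> (\<lambda>\<mu>. a + b * \<mu>) ` spectrum G"
    then obtain \<mu> where "\<mu> \<in> spectrum G" "k = a + b * \<mu>" by auto
    then show "k \<in> spectrum (a \<cdot>\<^sub>m 1\<^sub>m n + b \<cdot>\<^sub>m G)" unfolding spectrum_def ev_iff using b by simp
  qed
qed

lemma spectral_radius_insert_zero: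
  assumes "A \<in> carrier_mat n n" and "0 < n"
  shows "spectral_radius A = Max (norm ` insert 0 (spectrum A))"
proof -
  have "finite (spectrum A)" "spectrum A \<noteq> {}"
    using card_finite_spectrum(1)[OF assms(1)] spectrum_non_empty[OF assms] by auto
  then have "norm (0 :: complex) \<le> Max (norm ` spectrum A)"
    by (simp add: Max_ge_iff ex_in_conv)
  then show ?thesis
    unfolding spectral_radius_def using \<open>finite (spectrum A)\<close> \<open>spectrum A \<noteq> {}\<close>
    by (simp add: max_def)
qed

lemma sorted_nth_last_eq_Max:
  assumes "sorted xs" and "xs \<noteq> []"
  shows "xs ! (length xs - 1) = Max (set xs)"
proof (rule Max_eqI[symmetric])
  show "y \<le> xs ! (length xs - 1)" if "y \<in> set xs" for y
    using that assms(1) by (auto simp: in_set_conv_nth intro: sorted_nth_mono)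
qed (use assms(2) in auto)

lemma nth_rev_sorted_list_of_multiset_0:
  assumes "P \<noteq> {#}"
  shows "rev (sorted_list_of_multiset P) ! 0 = Max_mset P"
proof -
  have "sorted_list_of_multiset P \<noteq> []"
    using assms by (metis mset_sorted_list_of_multiset mset_zero_iff)
  then show ?thesis using sorted_nth_last_eq_Max[of "sorted_list_of_multiset P"] by (simp add: rev_nth)
qed

lemma sorted_nth_0_eq_Min:
  assumes "sorted xs" and "xs \<noteq> []"
  shows "xs ! 0 = Min (set xs)"
proof (rule Min_eqI[symmetric])
  show "xs ! 0 \<le> y" if "y \<in> set xs" for y
    using that assms(1) by (auto simp: in_set_conv_nth intro: sorted_nth_mono)
qed (use assms(2) in auto)

lemma nth_rev_sorted_list_of_multiset_zeros_plus_pos: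
  fixes Q :: "'a :: {linorder, zero} multiset"
  assumes pos: "\<forall>x\<in>#Q. 0 < x" and Q: "Q \<noteq> {#}"
  shows "rev (sorted_list_of_multiset (replicate_mset k 0 + Q)) ! (size Q - 1) = Min_mset Q"
proof -
  let ?ys = "sorted_list_of_multiset Q"
  have "sorted (replicate k 0 @ ?ys)"
    using pos by (auto simp: sorted_append less_imp_le)
  moreover have "mset (replicate k 0 @ ?ys) = replicate_mset k 0 + Q" by simp
  ultimately have "sorted_list_of_multiset (replicate_mset k 0 + Q) = replicate k 0 @ ?ys"
    using sorted_list_of_multiset_mset[of "replicate k 0 @ ?ys"] by (simp add: sorted_sort_id)
  moreover have "length ?ys = size Q" by (metis size_mset mset_sorted_list_of_multiset)
  moreover have "0 < size Q" using Q by (simp add: nonempty_has_size)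
  moreover have "?ys ! 0 = Min_mset Q"
    using sorted_nth_0_eq_Min[of ?ys] Q by (metis mset_sorted_list_of_multiset mset_zero_iff
        set_sorted_list_of_multiset sorted_sorted_list_of_multiset)
  ultimately show ?thesis by (simp add: nth_append rev_nth)
qed

context
  fixes C :: "real mat" and n1 n2 :: nat
  assumes C: "C \<in> carrier_mat n2 n1"
begin

lemma gram_quadratic_form:
  assumes "w \<in> carrier_vec n1"
  shows "w \<bullet> ((C\<^sup>T * C) *\<^sub>v w) = (C *\<^sub>v w) \<bullet> (C *\<^sub>v w)"
  using mult_mat_vec_scalar_prod_transpose[OF C assms, of "C *\<^sub>v w"] assms C
  by (simp add: assoc_mult_mat_vec[of _ n1 n2 _ n1])

lemma gram_eigenvector_value:
  assumes w: "w \<in> carrier_vec n1" and ev: "(C\<^sup>T * C) *\<^sub>v w = \<alpha> \<cdot>\<^sub>v w"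
  shows "\<alpha> * (w \<bullet> w) = (C *\<^sub>v w) \<bullet> (C *\<^sub>v w)"
  using gram_quadratic_form[OF w] w by (simp add: ev)

lemma gram_spectrum_real:
  shows "size (proots (char_poly (C\<^sup>T * C))) = n1"
    and "spectrum (map_mat complex_of_real (C\<^sup>T * C)) = of_real ` set_mset (proots (char_poly (C\<^sup>T * C)))"
proof -
  have G: "C\<^sup>T * C \<in> carrier_mat n1 n1" using C by simp
  have "(C\<^sup>T * C)\<^sup>T = C\<^sup>T * C" using C by (simp add: transpose_mult[of _ n1 n2])
  then have "\<forall>k\<in>spectrum (map_mat complex_of_real (C\<^sup>T * C)). Im k = 0"
    using symmetric_real_mat_eigenvalue_real[OF G] unfolding spectrum_def eigenvalue_def by blast
  then show "size (proots (char_poly (C\<^sup>T * C))) = n1"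
    and "spectrum (map_mat complex_of_real (C\<^sup>T * C)) = of_real ` set_mset (proots (char_poly (C\<^sup>T * C)))"
    using real_char_poly_splits[OF G] by auto
qed

lemma gram_eigenvalue_nonneg:
  assumes "eigenvalue (C\<^sup>T * C) \<alpha>"
  shows "0 \<le> \<alpha>"
proof -
  obtain w where w: "w \<in> carrier_vec n1" "w \<noteq> 0\<^sub>v n1" "(C\<^sup>T * C) *\<^sub>v w = \<alpha> \<cdot>\<^sub>v w"
    using assms C unfolding eigenvalue_def eigenvector_def by auto
  then have "0 \<le> \<alpha> * (w \<bullet> w)"
    using gram_eigenvector_value scalar_prod_self_nonneg by metis
  then show ?thesis using scalar_prod_self_pos_iff[OF w(1)] w(2) by (simp add: zero_le_mult_iff)
qed

lemma gram_eigenvalue_less_one: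
  assumes contraction: "\<forall>w\<in>carrier_vec n1. w \<noteq> 0\<^sub>v n1 \<longrightarrow> (C *\<^sub>v w) \<bullet> (C *\<^sub>v w) < w \<bullet> w"
    and "eigenvalue (C\<^sup>T * C) \<alpha>"
  shows "\<alpha> < 1"
proof -
  obtain w where w: "w \<in> carrier_vec n1" "w \<noteq> 0\<^sub>v n1" "(C\<^sup>T * C) *\<^sub>v w = \<alpha> \<cdot>\<^sub>v w"
    using assms C unfolding eigenvalue_def eigenvector_def by auto
  then have "\<alpha> * (w \<bullet> w) < 1 * (w \<bullet> w)"
    using gram_eigenvector_value contraction by auto
  then show ?thesis using scalar_prod_self_pos_iff[OF w(1)] w(2) by (simp add: mult_less_cancel_right)
qed

lemma gram_eigenvalue_zero_iff:
  "eigenvalue (C\<^sup>T * C) 0 \<longleftrightarrow> (\<exists>w\<in>carrier_vec n1. w \<noteq> 0\<^sub>v n1 \<and> C *\<^sub>v w = 0\<^sub>v n2)"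
proof
  assume "eigenvalue (C\<^sup>T * C) 0"
  then obtain w where w: "w \<in> carrier_vec n1" "w \<noteq> 0\<^sub>v n1" "(C\<^sup>T * C) *\<^sub>v w = 0 \<cdot>\<^sub>v w"
    using C unfolding eigenvalue_def eigenvector_def by auto
  then have "(C *\<^sub>v w) \<bullet> (C *\<^sub>v w) = 0" using gram_eigenvector_value by fastforce
  then show "\<exists>w\<in>carrier_vec n1. w \<noteq> 0\<^sub>v n1 \<and> C *\<^sub>v w = 0\<^sub>v n2"
    using w scalar_prod_self_pos_iff[of "C *\<^sub>v w" n2] C by auto
next
  assume "\<exists>w\<in>carrier_vec n1. w \<noteq> 0\<^sub>v n1 \<and> C *\<^sub>v w = 0\<^sub>v n2"
  then obtain w where "w \<in> carrier_vec n1" "w \<noteq> 0\<^sub>v n1" "C *\<^sub>v w = 0\<^sub>v n2" by auto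
  then show "eigenvalue (C\<^sup>T * C) 0"
    using C unfolding eigenvalue_def eigenvector_def
    by (auto simp: assoc_mult_mat_vec[of _ n1 n2 _ n1] intro!: exI[of _ w])
qed

lemma zero_in_gram_proots_iff_rank_deficient:
  "0 \<in># proots (char_poly (C\<^sup>T * C)) \<longleftrightarrow> vec_space.rank n2 C \<noteq> n1"
  using in_proots_char_poly_iff_eigenvalue[of "C\<^sup>T * C" n1] gram_eigenvalue_zero_iff C
    vec_space.rank_eq_ncols_iff_trivial_kernel[OF C] by auto

lemma proots_char_poly_gram_swap:
  "replicate_mset n2 0 + proots (char_poly (C\<^sup>T * C)) = replicate_mset n1 0 + proots (char_poly (C * C\<^sup>T))"
  using proots_char_poly_mult_commute[of "C\<^sup>T" n1 n2 C] C by simp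

lemma gram_proots_nonneg: "d \<in># proots (char_poly (C\<^sup>T * C)) \<Longrightarrow> 0 \<le> d"
  using in_proots_char_poly_iff_eigenvalue[of "C\<^sup>T * C" n1] gram_eigenvalue_nonneg C by auto

lemma lam_1_mult_transpose:
  assumes "0 < n1" and "0 < n2"
  shows "lam 1 (C * C\<^sup>T) = Max_mset (proots (char_poly (C\<^sup>T * C)))"
proof -
  let ?E = "proots (char_poly (C\<^sup>T * C))" and ?P = "proots (char_poly (C * C\<^sup>T))"
  have sets: "insert 0 (set_mset ?E) = insert 0 (set_mset ?P)"
    using arg_cong[OF proots_char_poly_gram_swap, of set_mset] assms by auto
  have "size ?E = n1" by (rule gram_spectrum_real(1))
  then have "?E \<noteq> {#}" using assms by auto
  then have "Max (insert 0 (set_mset ?E)) = Max_mset ?E"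
    using gram_proots_nonneg Max_in[of "set_mset ?E"] by (simp add: max_def)
  moreover have "size ?P = n2"
    using arg_cong[OF proots_char_poly_gram_swap, of size] \<open>size ?E = n1\<close> by simp
  then have "?P \<noteq> {#}" using assms by auto
  moreover have "Max_mset ?P \<in> insert 0 (set_mset ?E)"
    using sets Max_in[of "set_mset ?P"] \<open>?P \<noteq> {#}\<close> by auto
  then have "0 \<le> Max_mset ?P" using gram_proots_nonneg by auto
  ultimately show ?thesis
    unfolding lam_def eigs_desc_def using sets nth_rev_sorted_list_of_multiset_0[of ?P]
    by (simp add: max_def)
qed

lemma lam_rank_mult_transpose:
  assumes "0 < n1" and rank: "vec_space.rank n2 C = n1"
  shows "lam n1 (C * C\<^sup>T) = Min_mset (proots (char_poly (C\<^sup>T * C)))"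
proof -
  let ?E = "proots (char_poly (C\<^sup>T * C))" and ?P = "proots (char_poly (C * C\<^sup>T))"
  have zero: "0 \<notin># ?E"
    using zero_in_gram_proots_iff_rank_deficient rank by simp
  then have pos: "\<forall>d\<in>#?E. 0 < d"
    using gram_proots_nonneg by (metis order_le_less)
  have size: "size ?E = n1" by (rule gram_spectrum_real(1))
  have "count (replicate_mset n2 0 + ?E) 0 = count (replicate_mset n1 0 + ?P) 0"
    using proots_char_poly_gram_swap by simp
  then have "n1 \<le> n2" using zero by (simp add: not_in_iff)
  then have "replicate_mset n2 0 = replicate_mset n1 0 + replicate_mset (n2 - n1) (0 :: real)"
    by (intro multiset_eqI) simp
  then have "replicate_mset n1 0 + ?P = replicate_mset n1 0 + (replicate_mset (n2 - n1) 0 + ?E)"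
    using proots_char_poly_gram_swap by (simp add: add.assoc)
  then have "?P = replicate_mset (n2 - n1) 0 + ?E" by simp
  moreover have "?E \<noteq> {#}" using size assms(1) by auto
  ultimately show ?thesis
    unfolding lam_def eigs_desc_def
    using nth_rev_sorted_list_of_multiset_zeros_plus_pos[OF pos, of "n2 - n1"] size by simp
qed

end

text \<open>\<open>M(\<gamma>, 1) = [I; -C] [(1 - \<gamma>) I, -\<gamma> C\<^sup>T]\<close>, and the reversed product is the gradient step
  \<open>(1 - \<gamma>) I + \<gamma> C\<^sup>T C\<close>; so the two share their nonzero eigenvalues.\<close>
lemma Mmat_unit_step_factorization:
  fixes C :: "real mat"
  assumes C: "C \<in> carrier_mat n2 n1"
  obtains U V where "U \<in> carrier_mat (n1 + n2) n1" "V \<in> carrier_mat n1 (n1 + n2)"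
    "Mmat C g 1 = U * V" "V * U = (1 - g) \<cdot>\<^sub>m 1\<^sub>m n1 + g \<cdot>\<^sub>m (C\<^sup>T * C)"
proof
  define U where "U = four_block_mat (1\<^sub>m n1) (0\<^sub>m n1 0) ((- 1) \<cdot>\<^sub>m C) (0\<^sub>m n2 0)"
  define V where "V = four_block_mat ((1 - g) \<cdot>\<^sub>m 1\<^sub>m n1) ((- g) \<cdot>\<^sub>m C\<^sup>T) (0\<^sub>m 0 n1) (0\<^sub>m 0 n2)"
  have CT: "C\<^sup>T \<in> carrier_mat n1 n2" using C by simp
  show "U \<in> carrier_mat (n1 + n2) n1" "V \<in> carrier_mat n1 (n1 + n2)"
    unfolding U_def V_def using C by auto
  have "U * V = four_block_mat ((1 - g) \<cdot>\<^sub>m 1\<^sub>m n1) ((- g) \<cdot>\<^sub>m C\<^sup>T)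
      ((- 1) \<cdot>\<^sub>m C * ((1 - g) \<cdot>\<^sub>m 1\<^sub>m n1)) ((- 1) \<cdot>\<^sub>m C * ((- g) \<cdot>\<^sub>m C\<^sup>T))"
    unfolding U_def V_def using C CT
    by (subst mult_four_block_mat[of _ n1 n1 _ 0 _ n2 _ _ n1 _ n2]) auto
  also have "\<dots> = Mmat C g 1"
    unfolding Mmat_def using C CT
    by (intro cong_four_block_mat)
      (auto simp: mult_smult_assoc_mat[of _ n2 n1] mult_smult_distrib[of _ n2 n1] algebra_simps
        intro!: eq_matI)
  finally show "Mmat C g 1 = U * V" ..
  have "V * U = four_block_mat ((1 - g) \<cdot>\<^sub>m 1\<^sub>m n1 + (- g) \<cdot>\<^sub>m C\<^sup>T * ((- 1) \<cdot>\<^sub>m C))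
      (0\<^sub>m n1 0) (0\<^sub>m 0 n1) (0\<^sub>m 0 0)"
    unfolding U_def V_def using C CT
    by (subst mult_four_block_mat[of _ n1 n1 _ n2 _ 0 _ _ n1 _ 0]) auto
  also have "\<dots> = (1 - g) \<cdot>\<^sub>m 1\<^sub>m n1 + g \<cdot>\<^sub>m (C\<^sup>T * C)"
    using C CT by (subst four_block_mat_empty_blocks[of _ n1 n1])
      (auto simp: mult_smult_assoc_mat[of _ n1 n2] mult_smult_distrib[of _ n1 n2] intro!: eq_matI)
  finally show "V * U = (1 - g) \<cdot>\<^sub>m 1\<^sub>m n1 + g \<cdot>\<^sub>m (C\<^sup>T * C)" .
qed

lemma rho_Mmat_unit_step:
  fixes C :: "real mat" and S :: "real set"
  assumes C: "C \<in> carrier_mat n2 n1" and n1: "0 < n1" and g: "g \<noteq> 0"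
    and spec: "spectrum (map_mat complex_of_real (C\<^sup>T * C)) = of_real ` S"
  shows "rho (Mmat C g 1) = richardson_rate S g"
proof -
  obtain U V where U: "U \<in> carrier_mat (n1 + n2) n1" and V: "V \<in> carrier_mat n1 (n1 + n2)"
    and UV: "Mmat C g 1 = U * V" and VU: "V * U = (1 - g) \<cdot>\<^sub>m 1\<^sub>m n1 + g \<cdot>\<^sub>m (C\<^sup>T * C)"
    using Mmat_unit_step_factorization[OF C] .
  let ?Uc = "map_mat complex_of_real U" and ?Vc = "map_mat complex_of_real V"
  have Uc: "?Uc \<in> carrier_mat (n1 + n2) n1" and Vc: "?Vc \<in> carrier_mat n1 (n1 + n2)"
    using U V by auto
  have "?Vc * ?Uc = of_real (1 - g) \<cdot>\<^sub>m 1\<^sub>m n1 + of_real g \<cdot>\<^sub>m map_mat complex_of_real (C\<^sup>T * C)"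
    unfolding of_real_hom.mat_hom_mult[OF V U, symmetric] VU using C by (auto intro!: eq_matI)
  then have "spectrum (?Vc * ?Uc) = (\<lambda>\<mu>. of_real (1 - g) + of_real g * \<mu>) ` of_real ` S"
    using spectrum_affine[of "map_mat complex_of_real (C\<^sup>T * C)" n1 "of_real g" "of_real (1 - g)"] C g
    by (simp add: spec)
  moreover have "of_real (1 - g) + of_real g * complex_of_real \<mu> = of_real (1 - g * (1 - \<mu>))" for \<mu>
    by (simp add: algebra_simps)
  ultimately have "norm ` spectrum (?Vc * ?Uc) = (\<lambda>\<mu>. \<bar>1 - g * (1 - \<mu>)\<bar>) ` S"
    by (simp only: image_image norm_of_real)
  moreover have "rho (Mmat C g 1) = Max (norm ` insert 0 (spectrum (?Uc * ?Vc)))"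
    unfolding rho_def UV of_real_hom.mat_hom_mult[OF U V]
    using spectral_radius_insert_zero[of "?Uc * ?Vc" "n1 + n2"] Uc Vc n1 by auto
  ultimately show ?thesis
    unfolding richardson_rate_def insert_zero_spectrum_mult_commute[OF Uc Vc]
    using spectral_radius_insert_zero[of "?Vc * ?Uc" n1] Uc Vc n1
    by (simp add: spectral_radius_def)
qed

lemma hcat_mult_append:
  assumes A1: "A1 \<in> carrier_mat m n1" and A2: "A2 \<in> carrier_mat m n2"
    and a: "a \<in> carrier_vec n1" and d: "d \<in> carrier_vec n2"
  shows "hcat A1 A2 *\<^sub>v (a @\<^sub>v d) = A1 *\<^sub>v a + A2 *\<^sub>v d"
proof -
  have hcat_four_block: "hcat A1 A2 = four_block_mat A1 A2 (0\<^sub>m 0 n1) (0\<^sub>m 0 n2)"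
    using A1 A2 by (intro eq_matI) (auto simp: hcat_def)
  have "hcat A1 A2 *\<^sub>v (a @\<^sub>v d) = (A1 *\<^sub>v a + A2 *\<^sub>v d) @\<^sub>v (0\<^sub>m 0 n1 *\<^sub>v a + 0\<^sub>m 0 n2 *\<^sub>v d)"
    unfolding hcat_four_block by (rule four_block_mat_mult_vec[OF A1 A2 _ _ a d]) auto
  also have "\<dots> = A1 *\<^sub>v a + A2 *\<^sub>v d"
    using A1 A2 a d by (intro eq_vecI) auto
  finally show ?thesis .
qed

lemma isometry_scalar_prod_self:
  fixes A :: "real mat"
  assumes "A \<in> carrier_mat m n" and "A\<^sup>T * A = 1\<^sub>m n" and "w \<in> carrier_vec n"
  shows "(A *\<^sub>v w) \<bullet> (A *\<^sub>v w) = w \<bullet> w"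
  using mult_mat_vec_scalar_prod_transpose[of A m n w "A *\<^sub>v w"] assms
  by (simp add: assoc_mult_mat_vec[of _ n m _ n, symmetric])

text \<open>\<open>A\<^sub>1 w - A\<^sub>2 C w\<close> is the residual of projecting \<open>A\<^sub>1 w\<close> onto the range of \<open>A\<^sub>2\<close>: its squared
  norm is \<open>\<parallel>w\<parallel>\<^sup>2 - \<parallel>C w\<parallel>\<^sup>2\<close>, and it is nonzero because it equals \<open>[A\<^sub>1 A\<^sub>2] (w, -C w)\<close>.\<close>
lemma orthonormal_blocks_cross_contraction:
  fixes A1 A2 :: "real mat"
  assumes A1: "A1 \<in> carrier_mat m n1" and A2: "A2 \<in> carrier_mat m n2"
    and rank: "vec_space.rank m (hcat A1 A2) = n1 + n2"
    and o1: "A1\<^sup>T * A1 = 1\<^sub>m n1" and o2: "A2\<^sup>T * A2 = 1\<^sub>m n2"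
    and w: "w \<in> carrier_vec n1" and w0: "w \<noteq> 0\<^sub>v n1"
  shows "(A2\<^sup>T * A1 *\<^sub>v w) \<bullet> (A2\<^sup>T * A1 *\<^sub>v w) < w \<bullet> w"
proof -
  define y where "y = A1 *\<^sub>v w"
  define z where "z = A2\<^sup>T * A1 *\<^sub>v w"
  define p where "p = A2 *\<^sub>v z"
  have y: "y \<in> carrier_vec m" and z: "z \<in> carrier_vec n2" and p: "p \<in> carrier_vec m"
    unfolding y_def z_def p_def using A1 A2 w by auto
  have zy: "z = A2\<^sup>T *\<^sub>v y"
    unfolding z_def y_def using A1 A2 w by (simp add: assoc_mult_mat_vec[of _ n2 m _ n1])
  have "hcat A1 A2 *\<^sub>v (w @\<^sub>v (- z)) = y - p"
    unfolding y_def p_def using hcat_mult_append[OF A1 A2 w, of "- z"] A2 z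
    by (auto intro!: eq_vecI)
  moreover have "w @\<^sub>v (- z) \<noteq> 0\<^sub>v (n1 + n2)"
  proof
    assume eq: "w @\<^sub>v (- z) = 0\<^sub>v (n1 + n2)"
    have "w $ i = 0" if "i < n1" for i
      using arg_cong[OF eq, of "\<lambda>v. v $ i"] w that by simp
    then have "w = 0\<^sub>v n1" using w by (intro eq_vecI) auto
    with w0 show False ..
  qed
  moreover have "hcat A1 A2 \<in> carrier_mat m (n1 + n2)" using A1 A2 by (simp add: hcat_def)
  then have "\<forall>v\<in>carrier_vec (n1 + n2). hcat A1 A2 *\<^sub>v v = 0\<^sub>v m \<longrightarrow> v = 0\<^sub>v (n1 + n2)"
    using rank by (simp add: vec_space.rank_eq_ncols_iff_trivial_kernel[symmetric])
  moreover have "w @\<^sub>v (- z) \<in> carrier_vec (n1 + n2)" using w z by simp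
  ultimately have "y - p \<noteq> 0\<^sub>v m" by metis
  then have "0 < (y - p) \<bullet> (y - p)" using scalar_prod_self_pos_iff[of "y - p" m] y p by auto
  moreover have "p \<bullet> y = z \<bullet> z" "y \<bullet> p = z \<bullet> z"
    unfolding p_def using mult_mat_vec_scalar_prod_transpose[OF A2 z y] zy comm_scalar_prod[OF y p]
    by (simp_all add: p_def)
  moreover have "y \<bullet> y = w \<bullet> w" "p \<bullet> p = z \<bullet> z"
    unfolding y_def p_def using isometry_scalar_prod_self A1 A2 o1 o2 w z by auto
  moreover have "(y - p) \<bullet> (y - p) = y \<bullet> y - y \<bullet> p - (p \<bullet> y - p \<bullet> p)"
    using y p by (simp add: minus_scalar_prod_distrib[of _ m] scalar_prod_minus_distrib[of _ m])
  ultimately show ?thesis unfolding z_def by simp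
qed

lemma Mmat_unit_step_optimal_rate:
  fixes C :: "real mat"
  assumes C: "C \<in> carrier_mat n2 n1" and n1: "0 < n1"
    and contraction: "\<forall>w\<in>carrier_vec n1. w \<noteq> 0\<^sub>v n1 \<longrightarrow> (C *\<^sub>v w) \<bullet> (C *\<^sub>v w) < w \<bullet> w"
  defines "S \<equiv> set_mset (proots (char_poly (C\<^sup>T * C)))"
  shows "Inf ((\<lambda>g. rho (Mmat C g 1)) ` {0<..}) = (Max S - Min S) / (2 - Max S - Min S)"
    and "rho (Mmat C (2 / (2 - Max S - Min S)) 1) = (Max S - Min S) / (2 - Max S - Min S)"
proof -
  have "size (proots (char_poly (C\<^sup>T * C))) = n1" by (rule gram_spectrum_real(1)[OF C])
  then have S_nonempty: "S \<noteq> {}" using n1 unfolding S_def by auto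
  have S_below_one: "\<forall>\<mu>\<in>S. \<mu> < 1"
    unfolding S_def using in_proots_char_poly_iff_eigenvalue[of "C\<^sup>T * C" n1] C
      gram_eigenvalue_less_one[OF C contraction] by auto
  have rho_eq: "rho (Mmat C g 1) = richardson_rate S g" if "0 < g" for g
    using rho_Mmat_unit_step[OF C n1 _ gram_spectrum_real(2)[OF C]] that unfolding S_def by simp
  have "(\<lambda>g. rho (Mmat C g 1)) ` {0<..} = richardson_rate S ` {0<..}"
    by (rule image_cong) (auto simp: rho_eq)
  then show "Inf ((\<lambda>g. rho (Mmat C g 1)) ` {0<..}) = (Max S - Min S) / (2 - Max S - Min S)"
    using Inf_richardson_rate[of S] S_nonempty S_below_one unfolding S_def by simp
  have "0 < 2 / (2 - Max S - Min S)"
    using Max_plus_Min_less_2[of S] S_nonempty S_below_one unfolding S_def by simp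
  then show "rho (Mmat C (2 / (2 - Max S - Min S)) 1) = (Max S - Min S) / (2 - Max S - Min S)"
    using rho_eq richardson_rate_optimal_step[of S] S_nonempty S_below_one unfolding S_def by simp
qed

theorem mainTheorem9:
  fixes A1 A2 :: "real mat" and m n1 n2 :: nat
  assumes "A1 \<in> carrier_mat m n1" and "A2 \<in> carrier_mat m n2"
    and "vec_space.rank m (hcat A1 A2) = n1 + n2"
    and "A1\<^sup>T * A1 = 1\<^sub>m n1" and "A2\<^sup>T * A2 = 1\<^sub>m n2"
    and "A2\<^sup>T * A1 \<noteq> 0\<^sub>m n2 n1"
  shows "let C = A2\<^sup>T * A1; r = vec_space.rank n2 C;
             l1 = lam 1 (C * C\<^sup>T); lr = lam r (C * C\<^sup>T)
         in (r < n1 \<longrightarrow>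
               Inf ((\<lambda>g. rho (Mmat C g 1)) ` {0<..}) = l1 / (2 - l1)
             \<and> rho (Mmat C (2 / (2 - l1)) 1) = l1 / (2 - l1))
          \<and> (r = n1 \<longrightarrow>
               Inf ((\<lambda>g. rho (Mmat C g 1)) ` {0<..}) = (l1 - lr) / (2 - l1 - lr)
             \<and> (n1 > 1 \<longrightarrow> rho (Mmat C (2 / (2 - l1 - lr)) 1) = (l1 - lr) / (2 - l1 - lr)))"
proof -
  define C where "C = A2\<^sup>T * A1"
  define S where "S = set_mset (proots (char_poly (C\<^sup>T * C)))"
  have C: "C \<in> carrier_mat n2 n1" using assms(1,2) unfolding C_def by simp
  have dims: "0 < n1" "0 < n2"
    using assms(6) C unfolding C_def[symmetric] by (auto intro!: eq_matI)
  have "\<forall>w\<in>carrier_vec n1. w \<noteq> 0\<^sub>v n1 \<longrightarrow> (C *\<^sub>v w) \<bullet> (C *\<^sub>v w) < w \<bullet> w"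
    using orthonormal_blocks_cross_contraction[OF assms(1-5)] unfolding C_def by blast
  note optimal = Mmat_unit_step_optimal_rate[OF C dims(1) this, folded S_def]
  have l1: "lam 1 (C * C\<^sup>T) = Max S"
    unfolding S_def by (rule lam_1_mult_transpose[OF C dims])
  have "Min S = 0" if "vec_space.rank n2 C < n1"
    using zero_in_gram_proots_iff_rank_deficient[OF C] gram_proots_nonneg[OF C] that
    unfolding S_def by (intro Min_eqI) auto
  moreover have "lam n1 (C * C\<^sup>T) = Min S" if "vec_space.rank n2 C = n1"
    unfolding S_def by (rule lam_rank_mult_transpose[OF C dims(1) that])
  ultimately show ?thesis
    unfolding Let_def C_def[symmetric] using optimal l1 by auto
qed

end
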